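(* Let $\beta,\delta\in(0,1)$ and a positive integer $L$. For each $i$ consider the batch test $\tilde\phi^i_k=\mathbf 1\{\|\hat w^i_k-w^i_{\mathbf v}\|_1\ge\delta\}$ and the resulting batch test-then-punish profile $\bar{\mathbf s}_{\mathbf v}$, for some feasible payoff $\mathbf v$ with $v^i\ge\underline u^i$ for $i\in[N]$. Writing $\|w^j_{\mathbf v}\|_0=\sum_{\ell=1}^K\mathbf 1\{w^j_{\mathbf v}[a^j(\ell)]\ne0\}$, suppose that $\min_{j\in[N]}\|w^j_{\mathbf v}\|_0>1$ and $\delta<1-1/\min_{j\in[N]}\|w^j_{\mathbf v}\|_0$. Then $\mathbb P^{\bar{\mathbf s}_{\mathbf v}}(\kappa_{\boldsymbol\phi}<\infty)=1$.
   Context: Repeated game: $N$ players, finite pure action sets $\mathcal A^i=\{a^i(1),\dots,a^i(K)\}$, utilities $u^i:\mathcal A\to[0,1]$ extended multilinearly; feasible means $v^i\in\mathrm{conv}(\{u^i(a):a\in\mathcal A\})$. Public histories $h_t=(A_0,\dots,A_{t-1})$ of realized pure action profiles; each round players draw $A^i_t\sim s^i(h_t)$ independently; $\mathbb P^{\mathbf s}$ induced law. A mixed stage Nash equilibrium $\mathbf b$ is fixed, $\underline u^i=u^i(\mathbf b)$; $\mathbf w_{\mathbf v}=(w^1_{\mathbf v},\dots,w^N_{\mathbf v})$ with $u^i(\mathbf w_{\mathbf v})=v^i$. Batches $\mathcal B_k=\{Lk,\dots,L(k+1)-1\}$, $k_t=\lfloor t/L\rfloor$, $\hat w^i_k=L^{-1}(\sum_{t\in\mathcal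 B_k}\mathbf 1\{A^i_t=a^i(\ell)\})_{\ell=1}^K$. $\kappa_{\boldsymbol\phi}=\min_{i}\inf\{k\ge0:\tilde\phi^i_k=1\}$. Batch test-then-punish: $\bar s^j_{\mathbf v}(h_t)=w^j_{\mathbf v}$ if $k_t=0$; for $k_t\ge1$, $w^j_{\mathbf v}$ if $\prod_{k=1}^{k_t-1}\prod_i(1-\tilde\phi^i_k)=1$ and $b^j$ otherwise. *)

theory Defs
  imports "HOL-Probability.Probability"
begin

text \<open>Players are 0..N-1, pure actions of each player are 0..K-1 (action a^i(l+1) is index l).
A pure action profile is a list of length N. A mixed strategy is a function nat => real.\<close>

definition mixed :: "nat \<Rightarrow> (nat \<Rightarrow> real) \<Rightarrow> bool" where
  "mixed K \<sigma> \<longleftrightarrow> (\<forall>l. 0 \<le> \<sigma> l) \<and> (\<forall>l\<ge>K. \<sigma> l = 0) \<and> (\<Sum>l<K. \<sigma> l) = 1"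

definition profiles :: "nat \<Rightarrow> nat \<Rightarrow> nat list set" where
  "profiles N K = {a. length a = N \<and> (\<forall>j<N. a ! j < K)}"

definition mlext :: "nat \<Rightarrow> nat \<Rightarrow> (nat list \<Rightarrow> real) \<Rightarrow> (nat \<Rightarrow> nat \<Rightarrow> real) \<Rightarrow> real" where
  "mlext N K ui \<sigma> = (\<Sum>a\<in>profiles N K. (\<Prod>j<N. \<sigma> j (a ! j)) * ui a)"

definition mixed_NE :: "nat \<Rightarrow> nat \<Rightarrow> (nat \<Rightarrow> nat list \<Rightarrow> real) \<Rightarrow> (nat \<Rightarrow> nat \<Rightarrow> real) \<Rightarrow> bool" where
  "mixed_NE N K u b \<longleftrightarrow> (\<forall>j<N. mixed K (b j)) \<and>
     (\<forall>i<N. \<forall>\<sigma>. mixed K \<sigma> \<longrightarrow> mlext N K (u i) (b(i := \<sigma>)) \<le> mlext N K (u i) b)"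

definition feasible :: "nat \<Rightarrow> nat \<Rightarrow> (nat \<Rightarrow> nat list \<Rightarrow> real) \<Rightarrow> (nat \<Rightarrow> real) \<Rightarrow> bool" where
  "feasible N K u v \<longleftrightarrow> (\<exists>c. (\<forall>a\<in>profiles N K. 0 \<le> c a) \<and> (\<Sum>a\<in>profiles N K. c a) = 1 \<and>
      (\<forall>i<N. v i = (\<Sum>a\<in>profiles N K. c a * u i a)))"

definition l0 :: "nat \<Rightarrow> (nat \<Rightarrow> real) \<Rightarrow> nat" where
  "l0 K \<sigma> = card {l\<in>{..<K}. \<sigma> l \<noteq> 0}"

text \<open>Empirical frequency of action l of player i in batch k; A t is the realized profile at time t.\<close>
definition emp_freq :: "nat \<Rightarrow> (nat \<Rightarrow> nat list) \<Rightarrow> nat \<Rightarrow> nat \<Rightarrow> nat \<Rightarrow> real" where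
  "emp_freq L A i k l = (\<Sum>t\<in>{L*k..<L*(k+1)}. if A t ! i = l then 1 else 0) / real L"

definition batch_test :: "nat \<Rightarrow> nat \<Rightarrow> real \<Rightarrow> (nat \<Rightarrow> nat \<Rightarrow> real) \<Rightarrow> (nat \<Rightarrow> nat list) \<Rightarrow> nat \<Rightarrow> nat \<Rightarrow> bool" where
  "batch_test L K \<delta> w A i k \<longleftrightarrow> (\<Sum>l<K. \<bar>emp_freq L A i k l - w i l\<bar>) \<ge> \<delta>"

text \<open>kappa = min_i inf{k >= 0. phi~^i_k = 1}, in enat (infinity if never).\<close>
definition kappa :: "nat \<Rightarrow> nat \<Rightarrow> nat \<Rightarrow> real \<Rightarrow> (nat \<Rightarrow> nat \<Rightarrow> real) \<Rightarrow> (nat \<Rightarrow> nat list) \<Rightarrow> enat" where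
  "kappa N L K \<delta> w A = (INF i\<in>{..<N}. INF k\<in>{k. batch_test L K \<delta> w A i k}. enat k)"

text \<open>Batch test-then-punish strategy: mixed strategy of player j after public history h (h = [A_0,...,A_{t-1}]).\<close>
definition tp_strategy :: "nat \<Rightarrow> nat \<Rightarrow> nat \<Rightarrow> real \<Rightarrow> (nat \<Rightarrow> nat \<Rightarrow> real) \<Rightarrow> (nat \<Rightarrow> nat \<Rightarrow> real)
    \<Rightarrow> nat list list \<Rightarrow> nat \<Rightarrow> nat \<Rightarrow> real" where
  "tp_strategy N K L \<delta> w b h j =
     (let kt = length h div L in
      if kt = 0 then w j
      else if (\<forall>k\<in>{1..<kt}. \<forall>i<N. \<not> batch_test L K \<delta> w (\<lambda>s. h ! s) i k) then w j
      else b j)"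

definition path_prob :: "nat \<Rightarrow> (nat list list \<Rightarrow> nat \<Rightarrow> nat \<Rightarrow> real) \<Rightarrow> nat list list \<Rightarrow> real" where
  "path_prob N s h =
     (if \<forall>t<length h. length (h ! t) = N
      then (\<Prod>t<length h. \<Prod>j<N. s (take t h) j (h ! t ! j)) else 0)"

text \<open>M is the law P^s on infinite play paths: a probability measure on streams of profiles
  whose cylinder probabilities are given by path_prob (this determines it uniquely).\<close>
definition induced_law :: "nat \<Rightarrow> (nat list list \<Rightarrow> nat \<Rightarrow> nat \<Rightarrow> real) \<Rightarrow> nat list stream measure \<Rightarrow> bool" where
  "induced_law N s M \<longleftrightarrow> prob_space M \<and> sets M = sets (stream_space (count_space UNIV)) \<and>
     (\<forall>h. measure M {\<omega>\<in>space M. stake (length h) \<omega> = h} = path_prob N s h)"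

end

theory Submission
  imports Defs
begin

(*
  Some player i has two actions in the support of wv i, so one of them, l, has weight at most
  1/2. If player i plays l throughout a batch, its empirical distribution is the point mass at l,
  at L1-distance 2 (1 - wv i l) >= 1 > delta from wv i, and its test fires. As long as no test
  has fired, everybody follows wv; so, whatever happened before, a batch consists entirely of a
  fixed profile a with wv-positive entries and a ! i = l with probability
  alarm_prob = (prod_j wv j (a ! j))^L > 0. Hence no test fires in the first n batches with
  probability at most (1 - alarm_prob)^n, which tends to 0.
*)

lemma batch_test_cong:
  assumes "\<And>t. t \<in> {L*k..<L*(k+1)} \<Longrightarrow> A t = A' t"
  shows "batch_test L K \<delta> w A i k = batch_test L K \<delta> w A' i k"
proof -
  have "emp_freq L A i k l = emp_freq L A' i k l" for l
    unfolding emp_freq_def using assms by (auto intro!: sum.cong)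
  then show ?thesis unfolding batch_test_def by simp
qed

lemma kappa_less_infinity_iff:
  "kappa N L K \<delta> w A < \<infinity> \<longleftrightarrow> (\<exists>i<N. \<exists>k. batch_test L K \<delta> w A i k)"
  unfolding kappa_def INF_less_iff by auto

lemma mixed_le_one:
  assumes "mixed K \<sigma>"
  shows "\<sigma> l \<le> 1"
proof (cases "l < K")
  case True
  then have "\<sigma> l \<le> (\<Sum>l'<K. \<sigma> l')"
    using assms unfolding mixed_def by (intro member_le_sum) auto
  then show ?thesis using assms unfolding mixed_def by simp
qed (use assms in \<open>auto simp: mixed_def\<close>)

lemma mixed_ex_positive:
  assumes "mixed K \<sigma>"
  shows "\<exists>l<K. 0 < \<sigma> l"
proof (rule ccontr)
  assume "\<not> ?thesis"
  then have "\<forall>l<K. \<sigma> l = 0" using assms unfolding mixed_def by (auto simp: le_less)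
  then show False using assms unfolding mixed_def by simp
qed

lemma mixed_ex_small_positive:
  assumes "mixed K \<sigma>" and "l0 K \<sigma> \<ge> 2"
  shows "\<exists>l<K. 0 < \<sigma> l \<and> \<sigma> l \<le> 1/2"
proof -
  obtain l1 l2 where l12: "l1 \<noteq> l2" "{l1, l2} \<subseteq> {l\<in>{..<K}. \<sigma> l \<noteq> 0}"
    using assms(2) unfolding l0_def numeral_2_eq_2 card_le_Suc_iff by fastforce
  then have positive: "0 < \<sigma> l1" "0 < \<sigma> l2"
    using assms(1) unfolding mixed_def by (auto simp: less_le)
  have "\<sigma> l1 + \<sigma> l2 = (\<Sum>l\<in>{l1, l2}. \<sigma> l)" using l12(1) by simp
  also have "\<dots> \<le> (\<Sum>l<K. \<sigma> l)"
    using l12(2) assms(1) unfolding mixed_def by (intro sum_mono2) auto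
  also have "\<dots> = 1" using assms(1) unfolding mixed_def by simp
  finally show ?thesis using l12(2) positive by (cases "\<sigma> l1 \<le> 1/2") auto
qed

lemma l1_dist_point_mass_mixed:
  assumes "mixed K \<sigma>" and "l < K"
  shows "(\<Sum>l'<K. \<bar>(if l' = l then 1 else 0) - \<sigma> l'\<bar>) = 2 * (1 - \<sigma> l)"
proof -
  have rest: "(\<Sum>l'\<in>{..<K} - {l}. \<sigma> l') = 1 - \<sigma> l"
    using assms sum.remove[of "{..<K}" l \<sigma>] unfolding mixed_def by auto
  have "(\<Sum>l'<K. \<bar>(if l' = l then 1 else 0) - \<sigma> l'\<bar>)
      = \<bar>1 - \<sigma> l\<bar> + (\<Sum>l'\<in>{..<K} - {l}. \<bar>\<sigma> l'\<bar>)"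
    using assms(2) by (subst sum.remove[of _ l]) (auto intro!: sum.cong)
  also have "\<dots> = (1 - \<sigma> l) + (\<Sum>l'\<in>{..<K} - {l}. \<sigma> l')"
    using assms(1) mixed_le_one[OF assms(1), of l] unfolding mixed_def by simp
  finally show ?thesis using rest by simp
qed

lemma batch_test_constant_batch:
  assumes "L \<ge> 1" and "mixed K (w i)" and "l < K" and "\<delta> \<le> 2 * (1 - w i l)"
    and "\<forall>t\<in>{L*k..<L*(k+1)}. A t ! i = l"
  shows "batch_test L K \<delta> w A i k"
proof -
  have "emp_freq L A i k l' = (if l' = l then 1 else 0)" for l'
  proof -
    have "(\<Sum>t\<in>{L*k..<L*(k+1)}. if A t ! i = l' then 1 else 0)
        = (if l' = l then real L else 0)"
      using assms(5) by (auto intro: sum.neutral)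
    then show ?thesis unfolding emp_freq_def using assms(1) by auto
  qed
  then show ?thesis
    unfolding batch_test_def using l1_dist_point_mass_mixed[OF assms(2,3)] assms(4) by simp
qed

lemma ex_profile_positive_weights:
  assumes "\<forall>j<N. mixed K (w j)" and "i < N" and "l0 K (w i) \<ge> 2"
  obtains a where "a \<in> profiles N K" "\<forall>j<N. 0 < w j (a ! j)" "w i (a ! i) \<le> 1/2"
proof -
  have "\<forall>j<N. \<exists>l<K. 0 < w j l \<and> (j = i \<longrightarrow> w j l \<le> 1/2)"
    using assms mixed_ex_positive mixed_ex_small_positive by metis
  then obtain f
    where f: "\<forall>j<N. f j < K \<and> 0 < w j (f j) \<and> (j = i \<longrightarrow> w j (f j) \<le> 1/2)"
    by metis
  show ?thesis
    by (rule that[of "map f [0..<N]"]) (use f assms(2) in \<open>auto simp: profiles_def\<close>)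
qed

lemma tp_strategy_mixed:
  assumes "\<forall>j<N. mixed K (w j)" and "\<forall>j<N. mixed K (b j)" and "j < N"
  shows "mixed K (tp_strategy N K L \<delta> w b h j)"
  using assms unfolding tp_strategy_def Let_def by auto

definition histories :: "nat \<Rightarrow> nat \<Rightarrow> nat \<Rightarrow> nat list list set" where
  "histories N K m = {h. length h = m \<and> (\<forall>t<m. h ! t \<in> profiles N K)}"

lemma finite_profiles: "finite (profiles N K)"
proof -
  have "profiles N K \<subseteq> {xs. set xs \<subseteq> {..<K} \<and> length xs = N}"
    unfolding profiles_def by (auto simp: in_set_conv_nth)
  then show ?thesis by (rule finite_subset) (rule finite_lists_length_eq[OF finite_lessThan])
qed

lemma finite_histories: "finite (histories N K m)"
proof -
  have "histories N K m \<subseteq> {xs. set xs \<subseteq> profiles N K \<and> length xs = m}"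
    unfolding histories_def by (auto simp: in_set_conv_nth)
  then show ?thesis by (rule finite_subset) (rule finite_lists_length_eq[OF finite_profiles])
qed

lemma path_prob_append:
  assumes "\<forall>x\<in>set (h @ g). length x = N"
  shows "path_prob N s (h @ g) = path_prob N s h *
    (\<Prod>t\<in>{length h..<length h + length g}.
      \<Prod>j<N. s (take t (h @ g)) j ((h @ g) ! t ! j))"
proof -
  let ?f = "\<lambda>t. \<Prod>j<N. s (take t (h @ g)) j ((h @ g) ! t ! j)"
  have profile_lengths:
    "\<forall>t<length (h @ g). length ((h @ g) ! t) = N" "\<forall>t<length h. length (h ! t) = N"
    using assms nth_mem[of _ "h @ g"] nth_mem[of _ h] by auto
  have "(\<Prod>t<length (h @ g). ?f t)
      = (\<Prod>t<length h. ?f t) * (\<Prod>t\<in>{length h..<length h + length g}. ?f t)"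
    using prod.atLeastLessThan_concat[of 0 "length h" "length h + length g" ?f]
    by (simp add: atLeast0LessThan)
  moreover have "(\<Prod>t<length h. ?f t) = (\<Prod>t<length h. \<Prod>j<N. s (take t h) j (h ! t ! j))"
    by (intro prod.cong refl) (simp add: nth_append)
  ultimately show ?thesis unfolding path_prob_def using profile_lengths by simp
qed

locale play_law =
  fixes N K :: nat and s :: "nat list list \<Rightarrow> nat \<Rightarrow> nat \<Rightarrow> real"
    and M :: "nat list stream measure"
  assumes law: "induced_law N s M"
    and strategy_mixed: "\<And>h j. j < N \<Longrightarrow> mixed K (s h j)"
begin

sublocale prob_space M
  using law unfolding induced_law_def by blast

lemma sets_eq: "sets M = sets (stream_space (count_space UNIV))"
  using law unfolding induced_law_def by blast

lemma space_eq: "space M = UNIV"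
  using sets_eq_imp_space_eq[OF sets_eq] by (simp add: space_stream_space streams_UNIV)

lemma stake_vimage_in_events: "{\<omega>. stake m \<omega> \<in> A} \<in> events"
proof -
  have "stake m \<in> measurable M (count_space UNIV)"
    using measurable_cong_sets[OF sets_eq refl] measurable_stake by blast
  from measurable_sets[OF this, of A] show ?thesis using space_eq by (simp add: vimage_def)
qed

lemma cylinder_in_events: "{\<omega>. stake m \<omega> = h} \<in> events"
  using stake_vimage_in_events[of m "{h}"] by simp

lemma prob_cylinder: "length h = m \<Longrightarrow> prob {\<omega>. stake m \<omega> = h} = path_prob N s h"
  using law space_eq unfolding induced_law_def by auto

lemma path_prob_not_history:
  assumes "length h = m" and "h \<notin> histories N K m"
  shows "path_prob N s h = 0"
proof (cases "\<forall>t<length h. length (h ! t) = N")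
  case True
  then obtain t j where t: "t < m" and j: "j < N" "h ! t ! j \<ge> K"
    using assms unfolding histories_def profiles_def by force
  have "s (take t h) j (h ! t ! j) = 0"
    using strategy_mixed[OF j(1)] j(2) unfolding mixed_def by auto
  then have "(\<Prod>j<N. s (take t h) j (h ! t ! j)) = 0" using j(1) by (intro prod_zero) auto
  then show ?thesis unfolding path_prob_def using True t assms(1) by (auto intro: prod_zero)
qed (auto simp: path_prob_def)

lemma prob_stake_in_finite:
  assumes "finite B"
  shows "prob {\<omega>. stake m \<omega> \<in> B} = (\<Sum>h\<in>B. prob {\<omega>. stake m \<omega> = h})"
proof -
  have "{\<omega>. stake m \<omega> \<in> B} = (\<Union>h\<in>B. {\<omega>. stake m \<omega> = h})" by auto
  then show ?thesis using assms cylinder_in_events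
    by (simp only:) (intro finite_measure_finite_Union; auto simp: disjoint_family_on_def)
qed

lemma prob_stake_in:
  assumes "A \<subseteq> {h. length h = m}"
  shows "prob {\<omega>. stake m \<omega> \<in> A} = (\<Sum>h\<in>A \<inter> histories N K m. path_prob N s h)"
proof -
  have null: "(\<Union>h\<in>A - histories N K m. {\<omega>. stake m \<omega> = h}) \<in> null_sets M"
  proof (rule null_sets_UN')
    fix h assume "h \<in> A - histories N K m"
    then have "prob {\<omega>. stake m \<omega> = h} = 0"
      using assms prob_cylinder path_prob_not_history by auto
    then show "{\<omega>. stake m \<omega> = h} \<in> null_sets M"
      using cylinder_in_events by (intro null_setsI) (auto simp: emeasure_eq_measure)
  qed (rule countable_subset[OF subset_UNIV], simp)
  have "{\<omega>. stake m \<omega> \<in> A} = {\<omega>. stake m \<omega> \<in> A \<inter> histories N K m}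
      \<union> (\<Union>h\<in>A - histories N K m. {\<omega>. stake m \<omega> = h})"
    by auto
  then have "prob {\<omega>. stake m \<omega> \<in> A} = prob {\<omega>. stake m \<omega> \<in> A \<inter> histories N K m}"
    by (simp only:) (rule measure_Un_null_set[OF stake_vimage_in_events null])
  also have "\<dots> = (\<Sum>h\<in>A \<inter> histories N K m. prob {\<omega>. stake m \<omega> = h})"
    using finite_histories by (intro prob_stake_in_finite) blast
  also have "\<dots> = (\<Sum>h\<in>A \<inter> histories N K m. path_prob N s h)"
    using assms by (intro sum.cong refl prob_cylinder) auto
  finally show ?thesis .
qed

end

locale tp_law = play_law N K "tp_strategy N K L \<delta> wv b" M
  for N K L :: nat and \<delta> :: real and wv b :: "nat \<Rightarrow> nat \<Rightarrow> real"
    and M :: "nat list stream measure" +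
  fixes i :: nat and a :: "nat list"
  assumes L_pos: "L \<ge> 1" and \<delta>_less_1: "\<delta> < 1" and wv_mixed: "\<forall>j<N. mixed K (wv j)"
    and i_less: "i < N" and a_profile: "a \<in> profiles N K"
    and a_positive: "\<forall>j<N. 0 < wv j (a ! j)" and a_small: "wv i (a ! i) \<le> 1/2"
begin

abbreviation strategy :: "nat list list \<Rightarrow> nat \<Rightarrow> nat \<Rightarrow> real" where
  "strategy \<equiv> tp_strategy N K L \<delta> wv b"

definition clean_histories :: "nat \<Rightarrow> nat list list set" where
  "clean_histories n =
    {h. length h = L*n \<and> (\<forall>k<n. \<forall>j<N. \<not> batch_test L K \<delta> wv ((!) h) j k)}"

definition no_alarm :: "nat \<Rightarrow> nat list stream set" where
  "no_alarm n = {\<omega>. \<forall>k<n. \<forall>j<N. \<not> batch_test L K \<delta> wv (snth \<omega>) j k}"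

definition alarm_prob :: real where
  "alarm_prob = (\<Prod>j<N. wv j (a ! j)) ^ L"

lemma alarm_prob_pos: "0 < alarm_prob"
  unfolding alarm_prob_def using a_positive by (intro zero_less_power prod_pos) auto

lemma alarm_prob_le_1: "alarm_prob \<le> 1"
  unfolding alarm_prob_def using a_positive wv_mixed mixed_le_one
  by (intro power_le_one prod_nonneg prod_le_1) (auto simp: less_imp_le)

lemma batch_test_prefix:
  assumes "k < n" and "L*n \<le> length h"
  shows "batch_test L K \<delta> wv ((!) h) j k = batch_test L K \<delta> wv ((!) (take (L*n) h)) j k"
proof (rule batch_test_cong)
  fix t assume "t \<in> {L*k..<L*(k+1)}"
  moreover have "L*(k+1) \<le> L*n" using assms(1) by (intro mult_le_mono2) simp
  ultimately show "h ! t = take (L*n) h ! t" by simp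
qed

lemma no_alarm_eq: "no_alarm n = {\<omega>. stake (L*n) \<omega> \<in> clean_histories n}"
proof -
  have "batch_test L K \<delta> wv (snth \<omega>) j k = batch_test L K \<delta> wv ((!) (stake (L*n) \<omega>)) j k"
    if "k < n" for \<omega> j k
  proof (rule batch_test_cong)
    fix t assume "t \<in> {L*k..<L*(k+1)}"
    moreover have "L*(k+1) \<le> L*n" using that by (intro mult_le_mono2) simp
    ultimately show "\<omega> !! t = stake (L*n) \<omega> ! t" by simp
  qed
  then show ?thesis unfolding no_alarm_def clean_histories_def by auto
qed

lemma no_alarm_in_events: "no_alarm n \<in> events"
  unfolding no_alarm_eq by (rule stake_vimage_in_events)

lemma strategy_after_clean_history:
  assumes "take (L*n) h \<in> clean_histories n" and "L*n \<le> length h" "length h < L*n + L"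
  shows "strategy h = wv"
proof -
  have "length h div L = n"
    using assms(2,3) L_pos by (intro div_nat_eqI) (auto simp: mult.commute)
  moreover have "\<not> batch_test L K \<delta> wv ((!) h) j k" if "k < n" "j < N" for j k
    using assms(1) that batch_test_prefix[OF that(1) assms(2)]
    unfolding clean_histories_def by auto
  ultimately show ?thesis unfolding tp_strategy_def Let_def by (auto simp: fun_eq_iff)
qed

lemma path_prob_append_alarm_block:
  assumes "h \<in> clean_histories n \<inter> histories N K (L*n)"
  shows "path_prob N strategy (h @ replicate L a) = path_prob N strategy h * alarm_prob"
proof -
  have lh: "length h = L*n" using assms unfolding clean_histories_def by simp
  have "\<forall>x\<in>set (h @ replicate L a). length x = N"
    using assms a_profile unfolding histories_def profiles_def by (auto simp: in_set_conv_nth)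
  moreover have "(\<Prod>j<N. strategy (take t (h @ replicate L a)) j ((h @ replicate L a) ! t ! j))
      = (\<Prod>j<N. wv j (a ! j))" if "t \<in> {L*n..<L*n + L}" for t
  proof -
    have "take (L*n) (take t (h @ replicate L a)) = h" using that lh by (simp add: min_def)
    then have "strategy (take t (h @ replicate L a)) = wv"
      using that lh assms by (intro strategy_after_clean_history[of n]) auto
    moreover have "(h @ replicate L a) ! t = a"
      using that lh by (simp add: nth_append less_diff_conv2)
    ultimately show ?thesis by simp
  qed
  ultimately show ?thesis
    using path_prob_append[of h "replicate L a" N strategy] lh
    unfolding alarm_prob_def by simp
qed

lemma alarm_block_raises_alarm:
  assumes "stake (L*n + L) \<omega> = h @ replicate L a" and "length h = L*n"
  shows "\<omega> \<notin> no_alarm (Suc n)"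
proof -
  have "\<omega> !! t ! i = a ! i" if "t \<in> {L*n..<L*(n+1)}" for t
  proof -
    have "\<omega> !! t = stake (L*n + L) \<omega> ! t" using that by simp
    also have "\<dots> = a" using that assms by (simp add: nth_append less_diff_conv2)
    finally show ?thesis by simp
  qed
  moreover have "mixed K (wv i)" "a ! i < K"
    using wv_mixed i_less a_profile unfolding profiles_def by auto
  ultimately have "batch_test L K \<delta> wv (snth \<omega>) i n"
    using a_small \<delta>_less_1 L_pos by (intro batch_test_constant_batch[of L K wv i "a ! i"]) auto
  then show ?thesis using i_less unfolding no_alarm_def by auto
qed

lemma prob_no_alarm_Suc: "prob (no_alarm (Suc n)) \<le> (1 - alarm_prob) * prob (no_alarm n)"
proof -
  define C where "C = clean_histories n \<inter> histories N K (L*n)"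
  define T where "T = {\<omega>. stake (L*n + L) \<omega> \<in> (\<lambda>h. h @ replicate L a) ` C}"
  have lengths: "\<And>h. h \<in> C \<Longrightarrow> length h = L*n" unfolding C_def clean_histories_def by simp
  have T_sub: "T \<subseteq> no_alarm n"
  proof
    fix \<omega> assume "\<omega> \<in> T"
    then obtain h where h: "h \<in> C" "stake (L*n + L) \<omega> = h @ replicate L a"
      unfolding T_def by auto
    have "stake (L*n) \<omega> = take (L*n) (stake (L*n + L) \<omega>)" by (simp add: take_stake)
    also have "\<dots> = h" using h lengths by simp
    finally show "\<omega> \<in> no_alarm n" unfolding no_alarm_eq using h(1) by (simp add: C_def)
  qed
  have disjoint: "no_alarm (Suc n) \<inter> T = {}"
  proof -
    have "\<omega> \<notin> no_alarm (Suc n)" if "\<omega> \<in> T" for \<omega>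
      using that lengths alarm_block_raises_alarm unfolding T_def by auto
    then show ?thesis by blast
  qed
  have T_event: "T \<in> events" unfolding T_def by (rule stake_vimage_in_events)
  have "prob (no_alarm (Suc n)) + prob T = prob (no_alarm (Suc n) \<union> T)"
    using no_alarm_in_events T_event disjoint by (intro finite_measure_Union[symmetric])
  also have "\<dots> \<le> prob (no_alarm n)"
    using no_alarm_in_events T_sub by (intro finite_measure_mono) (auto simp: no_alarm_def)
  finally have "prob (no_alarm (Suc n)) + prob T \<le> prob (no_alarm n)" .
  moreover have "prob T = alarm_prob * prob (no_alarm n)"
  proof -
    have "(\<lambda>h. h @ replicate L a) ` C \<subseteq> histories N K (L*n + L)"
      using a_profile lengths unfolding C_def histories_def
      by (auto simp: nth_append less_diff_conv2)
    then have "prob T = (\<Sum>h'\<in>(\<lambda>h. h @ replicate L a) ` C. path_prob N strategy h')"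
      unfolding T_def using lengths by (subst prob_stake_in) (auto simp: Int_absorb2)
    also have "\<dots> = (\<Sum>h\<in>C. path_prob N strategy (h @ replicate L a))"
      by (rule sum.reindex_cong[where l="\<lambda>h. h @ replicate L a"]) (auto simp: inj_on_def)
    also have "\<dots> = alarm_prob * (\<Sum>h\<in>C. path_prob N strategy h)"
      unfolding C_def by (simp add: path_prob_append_alarm_block sum_distrib_left mult.commute)
    also have "(\<Sum>h\<in>C. path_prob N strategy h) = prob (no_alarm n)"
      unfolding no_alarm_eq C_def by (subst prob_stake_in) (auto simp: clean_histories_def)
    finally show ?thesis .
  qed
  ultimately show ?thesis by (simp add: algebra_simps)
qed

lemma prob_no_alarm_le: "prob (no_alarm n) \<le> (1 - alarm_prob) ^ n"
proof (induction n)
  case (Suc n)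
  have "prob (no_alarm (Suc n)) \<le> (1 - alarm_prob) * prob (no_alarm n)"
    by (rule prob_no_alarm_Suc)
  also have "\<dots> \<le> (1 - alarm_prob) * (1 - alarm_prob) ^ n"
    using Suc alarm_prob_le_1 by (intro mult_left_mono) auto
  finally show ?case by simp
qed simp

lemma prob_kappa_finite: "prob {\<omega>\<in>space M. kappa N L K \<delta> wv (snth \<omega>) < \<infinity>} = 1"
proof -
  let ?never = "\<Inter>n. no_alarm n"
  have never_event: "?never \<in> events" using no_alarm_in_events by blast
  have "{\<omega>\<in>space M. kappa N L K \<delta> wv (snth \<omega>) < \<infinity>} = space M - ?never"
    unfolding kappa_less_infinity_iff no_alarm_def space_eq by (blast intro: lessI)
  moreover have "prob ?never \<le> (1 - alarm_prob) ^ n" for n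
  proof -
    have "prob ?never \<le> prob (no_alarm n)"
      using no_alarm_in_events by (intro finite_measure_mono) auto
    then show ?thesis using prob_no_alarm_le[of n] by linarith
  qed
  then have "prob ?never \<le> 0"
    using alarm_prob_pos alarm_prob_le_1 by (intro LIMSEQ_le_const[OF LIMSEQ_power_zero]) auto
  then have "prob ?never = 0" using measure_nonneg by (rule antisym)
  ultimately show ?thesis using prob_compl[OF never_event] by simp
qed

end

theorem mainTheorem10:
  fixes N K L :: nat and \<beta> \<delta> :: real
    and u :: "nat \<Rightarrow> nat list \<Rightarrow> real"
    and b wv :: "nat \<Rightarrow> nat \<Rightarrow> real" and v :: "nat \<Rightarrow> real"
    and M :: "nat list stream measure"
  assumes "N \<ge> 1" and "K \<ge> 1" and "L \<ge> 1"
    and "0 < \<beta>" "\<beta> < 1" and "0 < \<delta>" "\<delta> < 1"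
    and "\<forall>i<N. \<forall>a\<in>profiles N K. 0 \<le> u i a \<and> u i a \<le> 1"
    and "mixed_NE N K u b"
    and "feasible N K u v"
    and "\<forall>j<N. mixed K (wv j)"
    and "\<forall>i<N. mlext N K (u i) wv = v i"
    and "\<forall>i<N. v i \<ge> mlext N K (u i) b"
    and "Min ((\<lambda>j. l0 K (wv j)) ` {..<N}) > 1"
    and "\<delta> < 1 - 1 / real (Min ((\<lambda>j. l0 K (wv j)) ` {..<N}))"
    and "induced_law N (tp_strategy N K L \<delta> wv b) M"
  shows "measure M {\<omega>\<in>space M. kappa N L K \<delta> wv (snth \<omega>) < \<infinity>} = 1"
proof -
  have b_mixed: "\<forall>j<N. mixed K (b j)" using assms(9) unfolding mixed_NE_def by auto
  have "Min ((\<lambda>j. l0 K (wv j)) ` {..<N}) \<le> l0 K (wv 0)" using assms(1) by (intro Min_le) auto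
  then have "l0 K (wv 0) \<ge> 2" using assms(14) by linarith
  then obtain a where "a \<in> profiles N K" "\<forall>j<N. 0 < wv j (a ! j)" "wv 0 (a ! 0) \<le> 1/2"
    using ex_profile_positive_weights[of N K wv 0] assms(1,11) by auto
  moreover have "play_law N K (tp_strategy N K L \<delta> wv b) M"
    using assms(11,16) b_mixed by unfold_locales (simp_all add: tp_strategy_mixed)
  ultimately interpret tp_law N K L \<delta> wv b M 0 a
    using assms(1,3,7,11) by (simp add: tp_law_def tp_law_axioms_def)
  show ?thesis by (rule prob_kappa_finite)
qed

end
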